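(* Let $(\mathcal{N},\|\cdot\|)$ be a real normed space with Borel $\sigma$-algebra $\mathcal{B}$ such that the addition is measurable from $(\mathcal{N}^2,\mathcal{B}\otimes\mathcal{B})$ to $(\mathcal{N},\mathcal{B})$, and let $\kappa$ be the density of $\mathcal{N}$. Then there is no probability measure on $(\kappa,\mathfrak{P}(\kappa))$ such that every singleton has measure zero.
   Context: The density of $\mathcal{N}$ is the smallest cardinal $\kappa$ such that $\mathcal{N}$ has a dense subset of cardinality $\kappa$; $\kappa$ is regarded as a set (von Neumann cardinal), and $\mathfrak{P}(E)$ denotes the power set of $E$. *)

theory Defs
  imports "HOL-Probability.Probability"
begin

definition dense_set :: "'a::topological_space set \<Rightarrow> bool" where
  "dense_set D \<longleftrightarrow> closure D = UNIV"

definition density_witness :: "'a::topological_space set \<Rightarrow> bool" where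
  "density_witness D \<longleftrightarrow> dense_set D \<and>
     (\<forall>E::'a set. dense_set E \<longrightarrow> (card_of D, card_of E) \<in> ordLeq)"

end

(* Ulam's argument: if a probability measure on all subsets of K vanishes on singletons, no
   well-order of K is measurable in the product sigma-algebra. Otherwise take a set I of positive
   measure all of whose initial segments are null; Fubini evaluates the measure of the strict order
   restricted to I x I once as 0 (vertical sections) and once as (measure I)^2 (horizontal sections).

   The normed space makes the strict cardinal order of K measurable. K, hence the density of N, is
   uncountable because the measure is diffuse, so fewer than |K| vectors never have a dense span:
   their rational combinations are too few. A transfinite recursion along the order then yields
   vectors x a at distance at least 1 from the span of all earlier ones. The differences x b - x c
   with b \<noteq> c are then pairwise at distance at least 1, so every set of off-diagonal pairs is the
   preimage of a closed set under the measurable map (b, c) \<mapsto> x b - x c. *)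
theory Submission
  imports Defs "HOL-Algebra.Free_Abelian_Groups" "HOL-Library.Countable_Set_Type"
begin

lemma exists_far_from_subspace:
  fixes S :: "'a::real_normed_vector set"
  assumes S: "subspace S" and "closure S \<noteq> UNIV"
  shows "\<exists>v. \<forall>w\<in>S. 1 \<le> norm (v - w)"
proof -
  obtain y where y: "y \<notin> closure S" using assms(2) by auto
  define d where "d = infdist y S"
  have "S \<noteq> {}" using S subspace_0 by auto
  then have d: "0 < d"
    using y in_closure_iff_infdist_zero infdist_nonneg unfolding d_def by (metis less_eq_real_def)
  have "1 \<le> norm ((1 / d) *\<^sub>R y - w)" if w: "w \<in> S" for w
  proof -
    have "d \<le> dist y (d *\<^sub>R w)" unfolding d_def using S w by (intro infdist_le subspace_scale)
    also have "\<dots> = norm (d *\<^sub>R ((1 / d) *\<^sub>R y - w))"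
      using d by (simp add: dist_norm algebra_simps)
    also have "\<dots> = d * norm ((1 / d) *\<^sub>R y - w)"
      using d by simp
    finally show ?thesis using d by simp
  qed
  then show ?thesis by blast
qed

lemma subspace_closure_if_rat_closed:
  fixes Q :: "'a::real_normed_vector set"
  assumes "0 \<in> Q" and add: "\<And>a b. a \<in> Q \<Longrightarrow> b \<in> Q \<Longrightarrow> a + b \<in> Q"
    and scale: "\<And>q a. a \<in> Q \<Longrightarrow> real_of_rat q *\<^sub>R a \<in> Q"
  shows "subspace (closure Q)"
proof -
  have "(\<lambda>p. fst p + snd p) ` closure (Q \<times> Q) \<subseteq> closure Q"
  proof (rule image_closure_subset)
    show "continuous_on (closure (Q \<times> Q)) (\<lambda>p. fst p + snd p)"
      by (intro continuous_on_add continuous_on_fst continuous_on_snd continuous_on_id)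
    show "(\<lambda>p. fst p + snd p) ` (Q \<times> Q) \<subseteq> closure Q"
      using add by (auto intro: closure_subset[THEN subsetD])
  qed simp
  moreover have "(\<lambda>p. fst p *\<^sub>R snd p) ` closure (\<rat> \<times> Q) \<subseteq> closure Q"
  proof (rule image_closure_subset)
    show "continuous_on (closure (\<rat> \<times> Q)) (\<lambda>p. fst p *\<^sub>R snd p)"
      by (intro continuous_on_scaleR continuous_on_fst continuous_on_snd continuous_on_id)
    show "(\<lambda>p. fst p *\<^sub>R snd p) ` (\<rat> \<times> Q) \<subseteq> closure Q"
      using scale by (auto intro: closure_subset[THEN subsetD] elim!: Rats_cases)
  qed simp
  ultimately show ?thesis
    using \<open>0 \<in> Q\<close> closure_subset
    unfolding subspace_def closure_Times Rats_closure_real by (fastforce simp: image_subset_iff)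
qed

definition rat_combination :: "(rat \<times> 'a::real_vector) list \<Rightarrow> 'a" where
  "rat_combination xs = (\<Sum>(q, v)\<leftarrow>xs. real_of_rat q *\<^sub>R v)"

lemma rat_combination_scale:
  "rat_combination (map (\<lambda>(p, v). (q * p, v)) xs) = real_of_rat q *\<^sub>R rat_combination xs"
  by (induction xs) (auto simp: rat_combination_def of_rat_mult scaleR_add_right)

lemma span_subset_closure_rat_combinations:
  fixes A :: "'a::real_normed_vector set"
  shows "span A \<subseteq> closure (rat_combination ` lists (UNIV \<times> A))"
proof (rule span_minimal)
  let ?Q = "rat_combination ` lists (UNIV \<times> A)"
  have "a \<in> ?Q" if "a \<in> A" for a
    using that by (intro image_eqI[of _ _ "[(1, a)]"]) (auto simp: rat_combination_def)
  then show "A \<subseteq> closure ?Q" using closure_subset by blast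
  show "subspace (closure ?Q)"
  proof (rule subspace_closure_if_rat_closed)
    show "0 \<in> ?Q" by (intro image_eqI[of _ _ "[]"]) (auto simp: rat_combination_def)
    show "a + b \<in> ?Q" if "a \<in> ?Q" "b \<in> ?Q" for a b
      using that by (auto simp: rat_combination_def intro!: image_eqI[of _ _ "_ @ _"])
    show "real_of_rat q *\<^sub>R a \<in> ?Q" if "a \<in> ?Q" for q a
    proof -
      obtain xs where "xs \<in> lists (UNIV \<times> A)" "a = rat_combination xs" using \<open>a \<in> ?Q\<close> by blast
      then show ?thesis
        by (intro image_eqI[of _ _ "map (\<lambda>(p, v). (q * p, v)) xs"])
          (auto simp: rat_combination_scale)
    qed
  qed
qed

lemma card_of_lists_Times_ordLess:
  assumes B: "countable B" and D: "\<not> countable D" and A: "|A| <o |D|"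
  shows "|lists (B \<times> A)| <o |D|"
proof (cases "countable (B \<times> A)")
  case True
  then have "|lists (B \<times> A)| \<le>o |UNIV :: nat set|"
    by (intro countable_card_of_nat[THEN iffD1] countable_lists)
  also have "|UNIV :: nat set| <o |D|"
    using D by (simp add: countable_card_of_nat not_ordLeq_iff_ordLess)
  finally show ?thesis .
next
  case False
  then have "\<not> countable A" using B by auto
  then have inf: "infinite A" using countable_finite by blast
  have "|B| \<le>o |UNIV :: nat set|" using B by (simp add: countable_card_of_nat)
  also have "|UNIV :: nat set| \<le>o |A|" using inf by (simp add: infinite_iff_card_of_nat)
  finally have "|B \<times> A| \<le>o |A|" using inf by (simp add: card_of_Times_ordLeq_infinite)
  moreover have "|lists (B \<times> A)| =o |B \<times> A|"
    using False by (intro card_of_lists_infinite) (auto dest: countable_finite)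
  ultimately show ?thesis using A ordIso_ordLeq_trans ordLeq_ordLess_trans by blast
qed

lemma closure_span_neq_UNIV_if_ordLess_density:
  fixes A D :: "'a::real_normed_vector set"
  assumes D: "density_witness D" "\<not> countable D" and A: "|A| <o |D|"
  shows "closure (span A) \<noteq> UNIV"
proof
  let ?Q = "rat_combination ` lists (UNIV \<times> A)"
  assume "closure (span A) = UNIV"
  then have "dense_set ?Q"
    using closure_mono[OF span_subset_closure_rat_combinations[of A]] by (auto simp: dense_set_def)
  then have "|D| \<le>o |?Q|" using D(1) by (simp add: density_witness_def)
  also have "|?Q| \<le>o |lists (UNIV \<times> A :: (rat \<times> 'a) set)|" by (rule card_of_image)
  finally show False
    using card_of_lists_Times_ordLess[OF countableI_type D(2) A] not_ordLess_ordLeq by blast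
qed

definition far_from_predecessors :: "'b rel \<Rightarrow> ('b \<Rightarrow> 'a::real_normed_vector) \<Rightarrow> bool" where
  "far_from_predecessors r x \<longleftrightarrow> (\<forall>a\<in>Field r. \<forall>w\<in>span (x ` underS r a). 1 \<le> norm (x a - w))"

lemma exists_far_from_predecessors:
  fixes r :: "'b rel"
  assumes r: "Well_order r"
    and proper: "\<And>a X. a \<in> Field r \<Longrightarrow> |X| \<le>o |underS r a| \<Longrightarrow>
      closure (span X) \<noteq> (UNIV :: 'a::real_normed_vector set)"
  shows "\<exists>x :: 'b \<Rightarrow> 'a. far_from_predecessors r x"
proof -
  define F where "F g a = (SOME v. \<forall>w\<in>span (g ` underS r a). 1 \<le> norm (v - w))"
    for g :: "'b \<Rightarrow> 'a" and a
  define x where "x = wfrec (r - Id) F"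
  have "\<forall>w\<in>span (x ` underS r a). 1 \<le> norm (x a - w)" if a: "a \<in> Field r" for a
  proof -
    have "x a = F (cut x (r - Id) a) a"
      unfolding x_def using r by (intro wfrec wo_rel.WF) (simp add: wo_rel_def)
    moreover have "cut x (r - Id) a ` underS r a = x ` underS r a"
      by (auto simp: cut_apply underS_def)
    ultimately have x_a: "x a = (SOME v. \<forall>w\<in>span (x ` underS r a). 1 \<le> norm (v - w))"
      unfolding F_def by simp
    have "closure (span (x ` underS r a)) \<noteq> UNIV"
      using a card_of_image by (rule proper)
    then have "\<exists>v. \<forall>w\<in>span (x ` underS r a). 1 \<le> norm (v - w)"
      by (intro exists_far_from_subspace subspace_span)
    then show ?thesis unfolding x_a by (rule someI_ex)
  qed
  then show ?thesis unfolding far_from_predecessors_def by blast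
qed

lemma exists_far_from_predecessors_card_of:
  fixes D :: "'a::real_normed_vector set" and K :: "'b set"
  assumes D: "density_witness D" "\<not> countable D" and K: "|K| =o |D|"
  shows "\<exists>x :: 'b \<Rightarrow> 'a. far_from_predecessors |K| x"
proof (rule exists_far_from_predecessors[OF card_of_Well_order])
  fix a and X :: "'a set"
  assume "a \<in> Field |K|" "|X| \<le>o |underS |K| a|"
  moreover have "|underS |K| a| <o |D|"
    using card_of_underS[OF card_of_Card_order \<open>a \<in> Field |K|\<close>] K by (rule ordLess_ordIso_trans)
  ultimately have "|X| <o |D|" using ordLeq_ordLess_trans by blast
  then show "closure (span X) \<noteq> UNIV" by (rule closure_span_neq_UNIV_if_ordLess_density[OF D])
qed

lemma far_from_predecessors_scaleR:
  assumes x: "far_from_predecessors r x" and a: "a \<in> Field r"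
    and w: "w \<in> span (x ` underS r a)" and k: "1 \<le> \<bar>k\<bar>"
  shows "1 \<le> norm (k *\<^sub>R x a - w)"
proof -
  have "k \<noteq> 0" using k by auto
  have "(1 / k) *\<^sub>R w \<in> span (x ` underS r a)" using w by (rule span_mul)
  then have "1 \<le> norm (x a - (1 / k) *\<^sub>R w)" using x a by (auto simp: far_from_predecessors_def)
  also have "\<dots> \<le> \<bar>k\<bar> * norm (x a - (1 / k) *\<^sub>R w)"
    using k by (simp add: mult_le_cancel_right1)
  also have "\<dots> = norm (k *\<^sub>R x a - w)"
    using \<open>k \<noteq> 0\<close> by (simp flip: norm_scaleR add: algebra_simps)
  finally show ?thesis .
qed

lemma far_from_predecessors_dist:
  assumes x: "far_from_predecessors r x" and r: "Well_order r"
    and ab: "a \<in> Field r" "b \<in> Field r" "a \<noteq> b"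
  shows "1 \<le> norm (x a - x b)"
proof -
  have *: "1 \<le> norm (x a - x b)" if "b \<in> underS r a" "a \<in> Field r" for a b
    using x that by (auto simp: far_from_predecessors_def intro: span_base)
  from r ab have "b \<in> underS r a \<or> a \<in> underS r b"
    using wo_rel.TOTALS by (auto simp: underS_def wo_rel_def)
  then show ?thesis using *[of b a] *[of a b] ab by (auto simp: norm_minus_commute)
qed

lemma far_from_predecessors_diff_dist:
  assumes x: "far_from_predecessors r x" and r: "Well_order r"
    and F: "a \<in> Field r" "b \<in> Field r" "c \<in> Field r" "d \<in> Field r"
    and ne: "a \<noteq> b" "c \<noteq> d" "(a, b) \<noteq> (c, d)"
  shows "1 \<le> norm ((x a - x b) - (x c - x d))"
proof -
  interpret W: wo_rel r using r by (simp add: wo_rel_def)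
  define m where "m = W.max2 (W.max2 a b) (W.max2 c d)"
  have m: "m \<in> {a, b, c, d}" "m \<in> Field r"
    using F W.max2_among[of a b] W.max2_among[of c d] W.max2_among[of "W.max2 a b" "W.max2 c d"]
    unfolding m_def by auto
  have "(z, m) \<in> r" if "z \<in> {a, b, c, d}" for z
    using that F W.max2_greater[of a b] W.max2_greater[of c d]
      W.max2_greater[of "W.max2 a b" "W.max2 c d"] W.max2_among[of a b] W.max2_among[of c d] W.TRANS
    unfolding m_def by (auto elim: transE)
  then have below: "z \<in> underS r m" if "z \<in> {a, b, c, d}" "z \<noteq> m" for z
    using that by (simp add: underS_def)
  define s where "s z = (if z = m then 0 else x z)" for z
  (* k is the coefficient of x m, the vector of the largest index; the rest lies in the span of the
     predecessors of m. *)
  define k :: real where "k = (if a = m then 1 else 0) - (if b = m then 1 else 0)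
    - (if c = m then 1 else 0) + (if d = m then 1 else 0)"
  have split: "(x a - x b) - (x c - x d) = k *\<^sub>R x m - (s b + s c - s a - s d)"
    by (simp add: k_def s_def algebra_simps)
  have s: "s z \<in> span (x ` underS r m)" if "z \<in> {a, b, c, d}" for z
    using below[OF that] by (auto simp: s_def span_zero intro: span_base)
  show ?thesis
  proof (cases "k = 0")
    case False
    then have "1 \<le> \<bar>k\<bar>" by (auto simp: k_def split: if_splits)
    moreover have "s b + s c - s a - s d \<in> span (x ` underS r m)"
      using s by (intro span_add span_diff) auto
    ultimately show ?thesis unfolding split by (intro far_from_predecessors_scaleR[OF x m(2)])
  next
    case True
    then have "(a = m \<and> c = m) \<or> (b = m \<and> d = m)" using m(1) ne by (auto simp: k_def split: if_splits)
    then show ?thesis using far_from_predecessors_dist[OF x r] F ne by auto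
  qed
qed

lemma sets_subset_if_uniformly_discrete_image:
  fixes f :: "'a \<Rightarrow> 'b::metric_space"
  assumes f: "f \<in> borel_measurable M" and T: "T \<in> sets M" and e: "0 < e"
    and sep: "\<And>p q. p \<in> T \<Longrightarrow> q \<in> T \<Longrightarrow> p \<noteq> q \<Longrightarrow> e \<le> dist (f p) (f q)"
    and S: "S \<subseteq> T"
  shows "S \<in> sets M"
proof -
  have inj: "p = q" if "p \<in> T" "q \<in> T" "f p = f q" for p q
    using sep[OF that(1,2)] that(3) e by fastforce
  have "closed (f ` S)"
    using S sep by (intro discrete_imp_closed[OF e]) (force simp: dist_commute)
  then have "f -` (f ` S) \<inter> space M \<in> sets M" using f by (simp add: measurable_sets)
  moreover have "S = (f -` (f ` S) \<inter> space M) \<inter> T"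
    using S inj sets.sets_into_space[OF T] by blast
  ultimately show ?thesis using T by (metis sets.Int)
qed

lemma strict_order_in_sets_pair_measure:
  fixes x :: "'b \<Rightarrow> 'a::real_normed_vector"
  assumes add_meas: "(\<lambda>(u, v). u + v) \<in> measurable (borel \<Otimes>\<^sub>M borel) (borel :: 'a measure)"
    and M: "sets M = Pow (space M)" and r: "Well_order r" "Field r = space M"
    and x: "far_from_predecessors r x"
  shows "r - Id \<in> sets (M \<Otimes>\<^sub>M M)"
proof -
  define f where "f = (\<lambda>p. x (fst p) - x (snd p))"
  have "x \<in> borel_measurable M" and "(\<lambda>a. - x a) \<in> borel_measurable M"
    using M by (auto simp: measurable_def)
  then have "(\<lambda>p. (x (fst p), - x (snd p))) \<in> measurable (M \<Otimes>\<^sub>M M) (borel \<Otimes>\<^sub>M borel)"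
    by (intro measurable_Pair measurable_compose[OF measurable_fst]
        measurable_compose[OF measurable_snd])
  from measurable_comp[OF this add_meas]
  have f: "f \<in> borel_measurable (M \<Otimes>\<^sub>M M)" by (simp add: f_def comp_def)
  define Off where "Off = space (M \<Otimes>\<^sub>M M) - f -` {0} \<inter> space (M \<Otimes>\<^sub>M M)"
  have Off: "Off \<in> sets (M \<Otimes>\<^sub>M M)"
    unfolding Off_def using f by (intro sets.Diff sets.top) (simp add: measurable_sets)
  have r_Off: "r - Id \<subseteq> Off"
  proof
    fix p assume p: "p \<in> r - Id"
    then obtain a b where ab: "p = (a, b)" "a \<in> Field r" "b \<in> Field r" "a \<noteq> b"
      by (cases p) (auto intro: FieldI1 FieldI2)
    then have "1 \<le> norm (f p)" using far_from_predecessors_dist[OF x r(1)] by (simp add: f_def)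
    moreover have "p \<in> space (M \<Otimes>\<^sub>M M)" using ab r(2) by (simp add: space_pair_measure)
    ultimately show "p \<in> Off" by (auto simp: Off_def)
  qed
  have sep: "1 \<le> dist (f p) (f q)" if "p \<in> Off" "q \<in> Off" "p \<noteq> q" for p q
  proof -
    obtain a b c d where abcd: "p = (a, b)" "q = (c, d)" by fastforce
    then have "a \<in> Field r" "b \<in> Field r" "c \<in> Field r" "d \<in> Field r" "a \<noteq> b" "c \<noteq> d"
      using that r(2) by (auto simp: Off_def space_pair_measure f_def)
    then show ?thesis
      using far_from_predecessors_diff_dist[OF x r(1)] that(3) abcd by (simp add: dist_norm f_def)
  qed
  show ?thesis by (rule sets_subset_if_uniformly_discrete_image[OF f Off zero_less_one sep r_Off])
qed

lemma exists_positive_set_with_null_initial_segments: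
  assumes r: "Well_order r" "Field r = space M"
    and pos: "0 < emeasure M (space M)"
  obtains I where "I \<subseteq> space M" "0 < emeasure M I" "\<And>b. b \<in> I \<Longrightarrow> emeasure M (underS r b) = 0"
proof (cases "\<exists>a\<in>space M. 0 < emeasure M (underS r a)")
  case False
  then show ?thesis using pos by (intro that[of "space M"]) auto
next
  case True
  then obtain a0 where a0: "a0 \<in> {a \<in> space M. 0 < emeasure M (underS r a)}" by blast
  have "wf (r - Id)" using r(1) by (simp add: wo_rel.WF wo_rel_def)
  from wfE_min[OF this a0] obtain a where "a \<in> {a \<in> space M. 0 < emeasure M (underS r a)}"
    and least: "\<And>b. (b, a) \<in> r - Id \<Longrightarrow> b \<notin> {a \<in> space M. 0 < emeasure M (underS r a)}"
    by blast
  then have a: "a \<in> space M" "0 < emeasure M (underS r a)" by auto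
  show ?thesis
  proof (rule that[of "underS r a"])
    show "underS r a \<subseteq> space M" using r(2) Order_Relation.underS_Field[of r a] by simp
    show "0 < emeasure M (underS r a)" by (fact a(2))
    show "emeasure M (underS r b) = 0" if "b \<in> underS r a" for b
    proof -
      have "b \<in> space M" "(b, a) \<in> r - Id"
        using that r(2) Order_Relation.underS_Field[of r a] by (auto simp: underS_def)
      then show ?thesis using least[of b] by simp
    qed
  qed
qed

lemma emeasure_square_le_pair_measure:
  assumes M: "sigma_finite_measure M" and R: "R \<in> sets (M \<Otimes>\<^sub>M M)" and I: "I \<in> sets M"
    and cover: "\<And>b. b \<in> I \<Longrightarrow> \<exists>N\<in>null_sets M. I \<subseteq> Pair b -` R \<union> N"
  shows "emeasure M I * emeasure M I \<le> emeasure (M \<Otimes>\<^sub>M M) R"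
proof -
  have "emeasure M I * emeasure M I = (\<integral>\<^sup>+b. emeasure M I * indicator I b \<partial>M)"
    using I by (simp add: nn_integral_cmult_indicator)
  also have "\<dots> \<le> (\<integral>\<^sup>+b. emeasure M (Pair b -` R) \<partial>M)"
  proof (rule nn_integral_mono)
    fix b
    show "emeasure M I * indicator I b \<le> emeasure M (Pair b -` R)"
    proof (cases "b \<in> I")
      case True
      then obtain N where N: "N \<in> null_sets M" "I \<subseteq> Pair b -` R \<union> N" using cover by blast
      have R_b: "Pair b -` R \<in> sets M" using R by (rule sets_Pair1)
      then have "emeasure M I \<le> emeasure M (Pair b -` R \<union> N)" using N by (intro emeasure_mono) auto
      also have "\<dots> = emeasure M (Pair b -` R)" using R_b N(1) by (rule emeasure_Un_null_set)
      finally show ?thesis using True by simp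
    qed simp
  qed
  also have "\<dots> = emeasure (M \<Otimes>\<^sub>M M) R"
    by (rule sigma_finite_measure.emeasure_pair_measure_alt[OF M R, symmetric])
  finally show ?thesis .
qed

lemma emeasure_eq_0_if_initial_segments_null:
  assumes M: "sigma_finite_measure M" "sets M = Pow (space M)"
    and singleton: "\<And>a. a \<in> space M \<Longrightarrow> emeasure M {a} = 0"
    and r: "Well_order r" "Field r = space M" "r - Id \<in> sets (M \<Otimes>\<^sub>M M)"
    and I: "I \<subseteq> space M" "\<And>b. b \<in> I \<Longrightarrow> emeasure M (underS r b) = 0"
  shows "emeasure M I = 0"
proof -
  define R where "R = (r - Id) \<inter> (I \<times> I)"
  have R: "R \<in> sets (M \<Otimes>\<^sub>M M)"
    unfolding R_def using r(3) I(1) M(2) by (intro sets.Int pair_measureI) auto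
  have segment_null: "underS r b \<union> {b} \<in> null_sets M" if "b \<in> I" for b
  proof -
    have "underS r b \<union> {b} \<subseteq> space M"
      using that I(1) r(2) Order_Relation.underS_Field[of r b] by auto
    moreover have "emeasure M (underS r b \<union> {b}) \<le> emeasure M (underS r b) + emeasure M {b}"
      using calculation M(2) by (intro emeasure_subadditive) auto
    ultimately show ?thesis using that I singleton M(2) by (intro null_setsI) auto
  qed
  have "emeasure (M \<Otimes>\<^sub>M M) R = (\<integral>\<^sup>+c. emeasure M ((\<lambda>b. (b, c)) -` R) \<partial>M)"
    using M(1) R
    by (intro pair_sigma_finite.emeasure_pair_measure_alt2) (simp_all add: pair_sigma_finite_def)
  also have "\<dots> = (\<integral>\<^sup>+c. 0 \<partial>M)"
  proof (rule nn_integral_cong)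
    fix c
    have "(\<lambda>b. (b, c)) -` R \<subseteq> (if c \<in> I then underS r c \<union> {c} else {})"
      by (auto simp: R_def underS_def)
    moreover have null: "(if c \<in> I then underS r c \<union> {c} else {}) \<in> null_sets M"
      using segment_null by auto
    ultimately have "emeasure M ((\<lambda>b. (b, c)) -` R)
        \<le> emeasure M (if c \<in> I then underS r c \<union> {c} else {})"
      by (intro emeasure_mono) auto
    then show "emeasure M ((\<lambda>b. (b, c)) -` R) = 0" using null by auto
  qed
  finally have "emeasure (M \<Otimes>\<^sub>M M) R = 0" by simp
  moreover have "emeasure M I * emeasure M I \<le> emeasure (M \<Otimes>\<^sub>M M) R"
  proof (rule emeasure_square_le_pair_measure[OF M(1) R])
    show "I \<in> sets M" using I(1) M(2) by auto
    fix b assume b: "b \<in> I"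
    have "c \<in> Pair b -` R \<union> (underS r b \<union> {b})" if "c \<in> I" for c
    proof -
      have "(b, c) \<in> r \<or> (c, b) \<in> r"
        using wo_rel.TOTALS[of r] r b that I(1) by (auto simp: wo_rel_def)
      then show ?thesis using b that by (auto simp: R_def underS_def)
    qed
    then show "\<exists>N\<in>null_sets M. I \<subseteq> Pair b -` R \<union> N" using segment_null[OF b] by blast
  qed
  ultimately show ?thesis by simp
qed

lemma emeasure_space_eq_0_if_strict_well_order_measurable:
  assumes "sigma_finite_measure M" "sets M = Pow (space M)"
    and "\<And>a. a \<in> space M \<Longrightarrow> emeasure M {a} = 0"
    and "Well_order r" "Field r = space M" "r - Id \<in> sets (M \<Otimes>\<^sub>M M)"
  shows "emeasure M (space M) = 0"
proof (rule ccontr)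
  assume "emeasure M (space M) \<noteq> 0"
  then obtain I where
    "I \<subseteq> space M" "0 < emeasure M I" "\<And>b. b \<in> I \<Longrightarrow> emeasure M (underS r b) = 0"
    using exists_positive_set_with_null_initial_segments[of r M] assms
    by (auto simp: zero_less_iff_neq_zero)
  then show False using emeasure_eq_0_if_initial_segments_null[OF assms] by simp
qed

theorem lemma4p10:
  fixes D :: "'a::real_normed_vector set" and K :: "'b set"
  assumes add_meas: "(\<lambda>(x, y). x + y) \<in> measurable (borel \<Otimes>\<^sub>M borel) (borel :: 'a measure)"
    and dens: "density_witness D"
    and kappa: "(card_of K, card_of D) \<in> ordIso"
  shows "\<not> (\<exists>M. prob_space M \<and> space M = K \<and> sets M = Pow K \<and>
                (\<forall>x\<in>K. emeasure M {x} = 0))"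
proof
  assume "\<exists>M. prob_space M \<and> space M = K \<and> sets M = Pow K \<and> (\<forall>x\<in>K. emeasure M {x} = 0)"
  then obtain M where M: "prob_space M" "space M = K" "sets M = Pow K"
    and singleton: "\<And>x. x \<in> K \<Longrightarrow> emeasure M {x} = 0" by blast
  interpret prob_space M by (fact M(1))
  have sets_M: "sets M = Pow (space M)" and Field_K: "Field |K| = space M"
    using M by (simp_all add: Field_card_of)
  have K: "\<not> countable K"
  proof
    assume "countable K"
    then have "(\<Union>a\<in>K. {a}) \<in> null_sets M" using M singleton by (intro null_sets_UN') auto
    then show False using emeasure_space_1 M(2) by auto
  qed
  have "\<not> countable D"
  proof
    assume "countable D"
    then have "|K| \<le>o |UNIV :: nat set|"
      using ordIso_ordLeq_trans[OF kappa] countable_card_of_nat by blast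
    then show False using K countable_card_of_nat by blast
  qed
  then obtain x :: "'b \<Rightarrow> 'a" where "far_from_predecessors |K| x"
    using exists_far_from_predecessors_card_of[OF dens _ kappa] by blast
  with sets_M Field_K have "|K| - Id \<in> sets (M \<Otimes>\<^sub>M M)"
    by (intro strict_order_in_sets_pair_measure[OF add_meas _ card_of_Well_order])
  with sets_M Field_K have "emeasure M (space M) = 0"
    using singleton M(2) card_of_Well_order sigma_finite_measure
    by (intro emeasure_space_eq_0_if_strict_well_order_measurable) auto
  then show False using emeasure_space_1 by simp
qed

end
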